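(* Let $\varepsilon>0$, let $\Omega\subset\mathbb{R}$ be a bounded set with $\operatorname{diam}(\Omega)=D$, and let $\mathcal{X},\mathcal{Y}\subset\Omega$ be disjoint. For $n\ge 0$ and $t\in\mathbb{R}$ define $$\alpha_n(t)=\frac{2^n\varepsilon^{2n}e^{-\varepsilon^2t^2}t^n}{n!},\qquad \beta_n(t)=e^{-\varepsilon^2t^2}t^n .$$ Let $\delta>0$. If the integer $r\ge 0$ satisfies $$r>\max\Big\{\log_2\!\Big(\frac{e^{2\varepsilon^2D^2}}{\delta}\Big)-1,\; 12\varepsilon^2D^2-1\Big\},$$ then for every $\bar x\in\mathcal{X}$, every $x\in\mathcal{X}$ and every $y\in\mathcal{Y}$, $$\Big|e^{-\varepsilon^2(x-y)^2}-\sum_{n=0}^{r}\alpha_n(x-\bar x)\,\beta_n(y-\bar x)\Big|<\delta .$$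
   Context: Here $\operatorname{diam}(\Omega)=\sup_{u,v\in\Omega}|u-v|$. Note that $\sum_{n=0}^\infty\alpha_n(x-\bar x)\beta_n(y-\bar x)=e^{-\varepsilon^2(x-y)^2}$ (Taylor expansion of the exponential). *)

theory Defs
  imports "HOL-Analysis.Analysis"
begin

definition alpha_n :: "real \<Rightarrow> nat \<Rightarrow> real \<Rightarrow> real" where
  "alpha_n \<epsilon> n t = (2 ^ n * \<epsilon> ^ (2 * n) * exp (- (\<epsilon>\<^sup>2 * t\<^sup>2)) * t ^ n) / fact n"

definition beta_n :: "real \<Rightarrow> nat \<Rightarrow> real \<Rightarrow> real" where
  "beta_n \<epsilon> n t = exp (- (\<epsilon>\<^sup>2 * t\<^sup>2)) * t ^ n"

end

theory Submission
  imports Defs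
begin

text \<open>
  With \<open>a = x - xbar\<close> and \<open>b = y - xbar\<close> we have
  \<open>exp (-\<epsilon>\<^sup>2(a - b)\<^sup>2) = exp (-\<epsilon>\<^sup>2a\<^sup>2) exp (-\<epsilon>\<^sup>2b\<^sup>2) exp (2\<epsilon>\<^sup>2ab)\<close>, and the
  \<open>n\<close>-th summand \<open>alpha_n \<epsilon> n a * beta_n \<epsilon> n b\<close> is the first two factors times the
  \<open>n\<close>-th Taylor term of the third. The first two factors are at most 1, so the error is
  bounded by the Taylor remainder of \<open>exp z\<close> after \<open>N = r + 1\<close> terms, where
  \<open>|z| \<le> c = 2\<epsilon>\<^sup>2D\<^sup>2\<close>. Using \<open>fact (i + N) \<ge> fact i * fact N\<close> and
  \<open>fact N \<ge> (N/e)\<^sup>N \<ge> (2c)\<^sup>N\<close> (as \<open>N > 6c\<close>), that remainder is at most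
  \<open>exp c / 2\<^sup>N\<close>, which is below \<open>\<delta>\<close> by the logarithmic condition on \<open>r\<close>.
\<close>

lemma power_div_fact_le_exp:
  fixes x :: real
  assumes "x \<ge> 0"
  shows "x ^ n / fact n \<le> exp x"
proof -
  have exp_sums: "(\<lambda>n. x ^ n / fact n) sums exp x"
    using exp_converges[of x] by (simp add: divide_inverse_commute)
  have "(\<Sum>k\<in>{n}. x ^ k / fact k) \<le> (\<Sum>k. x ^ k / fact k)"
    by (rule sum_le_suminf) (use exp_sums assms in \<open>auto simp: sums_summable\<close>)
  then show ?thesis
    using sums_unique[OF exp_sums] by simp
qed

lemma power_div_exp1_le_fact: "(real n / exp 1) ^ n \<le> fact n"
proof -
  have "real n ^ n / fact n \<le> exp (real n)"
    by (rule power_div_fact_le_exp) simp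
  also have "exp (real n) = exp 1 ^ n"
    by (simp add: exp_of_nat_mult[symmetric])
  finally show ?thesis
    by (simp add: power_divide field_simps)
qed

lemma fact_mult_fact_le_fact_add: "fact m * fact n \<le> (fact (m + n) :: 'a :: linordered_semidom)"
proof -
  have "fact m * fact n \<le> (fact (m + n) :: nat)"
    by (rule dvd_imp_le[OF fact_fact_dvd_fact]) simp
  then show ?thesis
    by (metis of_nat_fact of_nat_le_iff of_nat_mult)
qed

lemma exp_taylor_remainder_le:
  fixes z c :: real
  assumes z_le: "\<bar>z\<bar> \<le> c" and N_ge: "2 * exp 1 * c \<le> real N"
  shows "\<bar>exp z - (\<Sum>n<N. z ^ n / fact n)\<bar> \<le> exp c / 2 ^ N"
proof -
  have c_nonneg: "c \<ge> 0"
    using z_le by linarith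
  define f where "f n = z ^ n / fact n" for n
  define g where "g n = c ^ n / fact n / 2 ^ N" for n
  have "f sums exp z"
    unfolding f_def using exp_converges[of z] by (simp add: divide_inverse_commute)
  then have tail_sums: "(\<lambda>i. f (i + N)) sums (exp z - (\<Sum>i<N. f i))"
    by (simp add: sums_iff_shift)
  have g_sums: "g sums (exp c / 2 ^ N)"
    unfolding g_def using exp_converges[of c]
    by (intro sums_divide) (simp add: divide_inverse_commute)
  have "(2 * c) ^ N \<le> (real N / exp 1) ^ N"
    using c_nonneg N_ge by (intro power_mono) (auto simp: field_simps)
  also have "\<dots> \<le> fact N"
    by (rule power_div_exp1_le_fact)
  finally have cN_small: "c ^ N / fact N \<le> 1 / 2 ^ N"
    by (simp add: power_mult_distrib field_simps)
  have tail_le: "\<bar>f (i + N)\<bar> \<le> g i" for i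
  proof -
    have "\<bar>f (i + N)\<bar> = \<bar>z\<bar> ^ (i + N) / fact (i + N)"
      by (simp add: f_def abs_divide power_abs)
    also have "\<dots> \<le> c ^ (i + N) / fact (i + N)"
      using z_le by (intro divide_right_mono power_mono) auto
    also have "\<dots> \<le> c ^ (i + N) / (fact i * fact N)"
      by (rule divide_left_mono[OF fact_mult_fact_le_fact_add]) (auto simp: c_nonneg)
    also have "\<dots> = c ^ i / fact i * (c ^ N / fact N)"
      by (simp add: power_add)
    also have "\<dots> \<le> c ^ i / fact i * (1 / 2 ^ N)"
      using cN_small c_nonneg by (intro mult_left_mono) auto
    finally show ?thesis
      by (simp add: g_def)
  qed
  have abs_summable: "summable (\<lambda>i. \<bar>f (i + N)\<bar>)"
    by (rule summable_comparison_test'[OF sums_summable[OF g_sums], of 0]) (simp add: tail_le)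
  have "\<bar>exp z - (\<Sum>i<N. f i)\<bar> = \<bar>\<Sum>i. f (i + N)\<bar>"
    using sums_unique[OF tail_sums] by simp
  also have "\<dots> \<le> (\<Sum>i. \<bar>f (i + N)\<bar>)"
    by (rule summable_rabs[OF abs_summable])
  also have "\<dots> \<le> (\<Sum>i. g i)"
    by (rule suminf_le[OF tail_le abs_summable sums_summable[OF g_sums]])
  also have "\<dots> = exp c / 2 ^ N"
    using sums_unique[OF g_sums] by simp
  finally show ?thesis
    by (simp add: f_def)
qed

lemma gaussian_kernel_factor:
  fixes \<epsilon> a b :: real
  shows "exp (- (\<epsilon>\<^sup>2 * (a - b)\<^sup>2)) =
    exp (- (\<epsilon>\<^sup>2 * a\<^sup>2)) * exp (- (\<epsilon>\<^sup>2 * b\<^sup>2)) * exp (2 * \<epsilon>\<^sup>2 * a * b)"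
  by (simp only: exp_add[symmetric]) (simp add: power2_eq_square algebra_simps)

lemma alpha_n_mult_beta_n:
  "alpha_n \<epsilon> n a * beta_n \<epsilon> n b =
    exp (- (\<epsilon>\<^sup>2 * a\<^sup>2)) * exp (- (\<epsilon>\<^sup>2 * b\<^sup>2)) * ((2 * \<epsilon>\<^sup>2 * a * b) ^ n / fact n)"
  unfolding alpha_n_def beta_n_def
  by (simp add: power_mult_distrib power_mult[symmetric] mult.commute[of 2 n] field_simps)

lemma gaussian_expansion_error_le:
  "\<bar>exp (- (\<epsilon>\<^sup>2 * (a - b)\<^sup>2)) - (\<Sum>n<N. alpha_n \<epsilon> n a * beta_n \<epsilon> n b)\<bar>
    \<le> \<bar>exp z - (\<Sum>n<N. z ^ n / fact n)\<bar>"
  if "z = 2 * \<epsilon>\<^sup>2 * a * b"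
proof -
  define E where "E = exp (- (\<epsilon>\<^sup>2 * a\<^sup>2)) * exp (- (\<epsilon>\<^sup>2 * b\<^sup>2))"
  have "- (\<epsilon>\<^sup>2 * a\<^sup>2) + - (\<epsilon>\<^sup>2 * b\<^sup>2) \<le> 0"
    by (intro add_nonpos_nonpos) simp_all
  then have E_le_1: "E \<le> 1"
    unfolding E_def exp_add[symmetric] by simp
  moreover have "\<bar>exp (- (\<epsilon>\<^sup>2 * (a - b)\<^sup>2)) - (\<Sum>n<N. alpha_n \<epsilon> n a * beta_n \<epsilon> n b)\<bar>
      = E * \<bar>exp z - (\<Sum>n<N. z ^ n / fact n)\<bar>"
    unfolding gaussian_kernel_factor alpha_n_mult_beta_n that sum_distrib_left[symmetric]
      right_diff_distrib[symmetric] abs_mult E_def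
    by simp
  ultimately show ?thesis
    using mult_right_mono[OF E_le_1 abs_ge_zero] by simp
qed

lemma divide_power2_less_of_log_less:
  fixes A \<delta> :: real
  assumes "A > 0" "\<delta> > 0" "log 2 (A / \<delta>) < real N"
  shows "A / 2 ^ N < \<delta>"
proof -
  have "A / \<delta> < 2 powr real N"
    using assms log_less_iff[of 2 "A / \<delta>"] by simp
  then have "A / \<delta> < 2 ^ N"
    by (subst (asm) powr_realpow) auto
  then show ?thesis
    using assms(2) by (simp add: field_simps)
qed

theorem lemma1:
  fixes \<epsilon> D \<delta> :: real and \<Omega> X Y :: "real set" and r :: nat
  assumes "\<epsilon> > 0"
    and "bounded \<Omega>" and "diameter \<Omega> = D"
    and "X \<subseteq> \<Omega>" and "Y \<subseteq> \<Omega>" and "X \<inter> Y = {}"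
    and "\<delta> > 0"
    and "real r > max (log 2 (exp (2 * \<epsilon>\<^sup>2 * D\<^sup>2) / \<delta>) - 1) (12 * \<epsilon>\<^sup>2 * D\<^sup>2 - 1)"
  shows "\<forall>xbar\<in>X. \<forall>x\<in>X. \<forall>y\<in>Y.
    \<bar>exp (- (\<epsilon>\<^sup>2 * (x - y)\<^sup>2)) - (\<Sum>n = 0..r. alpha_n \<epsilon> n (x - xbar) * beta_n \<epsilon> n (y - xbar))\<bar> < \<delta>"
proof (intro ballI)
  fix xbar x y assume "xbar \<in> X" "x \<in> X" "y \<in> Y"
  define a b c where "a = x - xbar" and "b = y - xbar" and "c = 2 * \<epsilon>\<^sup>2 * D\<^sup>2"
  have "\<bar>a\<bar> \<le> D" "\<bar>b\<bar> \<le> D"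
    using diameter_bounded_bound[OF assms(2)] \<open>xbar \<in> X\<close> \<open>x \<in> X\<close> \<open>y \<in> Y\<close> assms(3-5)
    by (force simp: a_def b_def dist_real_def)+
  then have "2 * \<epsilon>\<^sup>2 * (\<bar>a\<bar> * \<bar>b\<bar>) \<le> 2 * \<epsilon>\<^sup>2 * (D * D)"
    by (intro mult_left_mono mult_mono) simp_all
  then have z_le: "\<bar>2 * \<epsilon>\<^sup>2 * a * b\<bar> \<le> c"
    by (simp add: c_def abs_mult power2_eq_square mult.assoc)
  have "2 * exp 1 * c \<le> 2 * 3 * c"
    using exp_le by (intro mult_right_mono) (auto simp: c_def)
  moreover have "6 * c < real (Suc r)"
    using assms(8) by (simp add: c_def)
  ultimately have "\<bar>exp (2 * \<epsilon>\<^sup>2 * a * b) - (\<Sum>n<Suc r. (2 * \<epsilon>\<^sup>2 * a * b) ^ n / fact n)\<bar>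
      \<le> exp c / 2 ^ Suc r"
    by (intro exp_taylor_remainder_le[OF z_le]) linarith
  moreover have "exp c / 2 ^ Suc r < \<delta>"
    using assms(7,8) by (intro divide_power2_less_of_log_less) (simp_all add: c_def)
  moreover have "{0..r} = {..<Suc r}" "x - y = a - b"
    by (auto simp: a_def b_def)
  ultimately show "\<bar>exp (- (\<epsilon>\<^sup>2 * (x - y)\<^sup>2)) - (\<Sum>n = 0..r. alpha_n \<epsilon> n (x - xbar) * beta_n \<epsilon> n (y - xbar))\<bar> < \<delta>"
    using gaussian_expansion_error_le[OF refl, of \<epsilon> a b "Suc r"]
    unfolding a_def[symmetric] b_def[symmetric] by simp
qed

end
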